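(* Let $(X,d)$ and $(\Lambda,\rho)$ be compact metric spaces and $\omega:\Lambda\times X\to X$ continuous. Let $\nu$ be a $\beta$-invariant Borel probability measure on $\Omega$ with $\nu(F)=1$, and let $\nu^{\Phi}$ be the (unique) $\Phi$-invariant Borel probability measure on $\Omega\times X$ with $\pi_*(\nu^{\Phi})=\nu$. If $\nu$ is ergodic for $\beta$, then $\nu^{\Phi}$ is ergodic for $\Phi$.
   Context: $\omega_\lambda(x)=\omega(\lambda,x)$. $\Omega=\Lambda^{\mathbb{N}}$ with the product topology; $\beta:\Omega\to\Omega$ is the shift $\beta(\sigma_1,\sigma_2,\dots)=(\sigma_2,\sigma_3,\dots)$. The skew product is $\Phi:\Omega\times X\to\Omega\times X$, $\Phi(\sigma,x)=(\beta(\sigma),\omega_{\sigma_1}(x))$, and $\pi:\Omega\times X\to\Omega$ is $\pi(\sigma,x)=\sigma$. $F=\{\sigma\in\Omega:\lim_{n\to\infty}\frac1n\sum_{i=1}^n\operatorname{Diam}(\omega_{\sigma_i}\circ\cdots\circ\omega_{\sigma_1}(X))=0\}$, with $\operatorname{Diam}(A)=\sup\{d(x,y):x,y\in A\}$. *)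

theory Defs
  imports "HOL-Probability.Probability"
begin

text \<open>Shift on \<Omega> = \<Lambda>^\<nat>; sequences are indexed from 0, so sigma 0 is sigma_1.\<close>
definition beta_shift :: "(nat \<Rightarrow> 'l) \<Rightarrow> (nat \<Rightarrow> 'l)" where
  "beta_shift \<sigma> = (\<lambda>n. \<sigma> (Suc n))"

definition skew :: "('l \<Rightarrow> 'x \<Rightarrow> 'x) \<Rightarrow> (nat \<Rightarrow> 'l) \<times> 'x \<Rightarrow> (nat \<Rightarrow> 'l) \<times> 'x" where
  "skew \<omega> p = (beta_shift (fst p), \<omega> (fst p 0) (snd p))"

fun comp_iter :: "('l \<Rightarrow> 'x \<Rightarrow> 'x) \<Rightarrow> (nat \<Rightarrow> 'l) \<Rightarrow> nat \<Rightarrow> 'x \<Rightarrow> 'x" where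
  "comp_iter \<omega> \<sigma> 0 = id"
| "comp_iter \<omega> \<sigma> (Suc n) = \<omega> (\<sigma> n) \<circ> comp_iter \<omega> \<sigma> n"

text \<open>The set F (X is the whole type 'x).\<close>
definition Fset :: "('l \<Rightarrow> 'x::metric_space \<Rightarrow> 'x) \<Rightarrow> (nat \<Rightarrow> 'l) set" where
  "Fset \<omega> = {\<sigma>. (\<lambda>n. (1 / real n) * (\<Sum>i=1..n. diameter (range (comp_iter \<omega> \<sigma> i)))) \<longlonglongrightarrow> 0}"

definition invariant_measure :: "'a measure \<Rightarrow> ('a \<Rightarrow> 'a) \<Rightarrow> bool" where
  "invariant_measure M T \<longleftrightarrow> T \<in> M \<rightarrow>\<^sub>M M \<and> distr M M T = M"

definition ergodic :: "'a measure \<Rightarrow> ('a \<Rightarrow> 'a) \<Rightarrow> bool" where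
  "ergodic M T \<longleftrightarrow> invariant_measure M T \<and>
     (\<forall>A\<in>sets M. T -` A \<inter> space M = A \<longrightarrow> emeasure M A = 0 \<or> emeasure M A = 1)"

end

theory Submission
  imports Defs
begin

(*
  An invariant set A of the skew product is approximated in L1 by a Lipschitz function g with
  values in [0,1].  Since A is invariant and the skew product preserves the measure, the orbit
  averages of g approximate A at least as well as g does.  Along every base sequence in F the
  fibre maps contract on average, so these orbit averages become independent of the fibre
  coordinate; hence A is approximated by sets of the form fst -` B.  A Borel-Cantelli argument
  upgrades this to A = fst -` I almost everywhere for a shift-invariant Borel set I, and then
  mu A = nu I, which is 0 or 1 by ergodicity of nu.
*)

section \<open>Approximation of Borel sets in finite metric measure spaces\<close>

lemma finite_measure_thickening_diff_small:
  fixes M :: "'a::metric_space measure"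
  assumes "finite_measure M" and "sets M = sets borel"
    and "closed C" and "C \<noteq> {}" and "e > 0"
  obtains r where "r > 0" and "measure M ({p. infdist p C < r} - C) < e"
proof -
  interpret finite_measure M by fact
  define S where "S m = {p. infdist p C < 1 / real (Suc m)} - C" for m
  have "S m \<in> sets M" for m
    unfolding S_def assms(2) using assms(3)
    by (intro sets.Diff borel_open open_Collect_less continuous_intros) auto
  moreover have "decseq S"
    unfolding S_def decseq_Suc_iff by (auto elim!: order.strict_trans2 simp: frac_le)
  ultimately have "(\<lambda>m. measure M (S m)) \<longlonglongrightarrow> measure M (\<Inter>m. S m)"
    by (intro finite_Lim_measure_decseq) auto
  moreover have "(\<Inter>m. S m) = {}"
  proof safe
    fix p assume p: "p \<in> (\<Inter>m. S m)"
    then have "infdist p C > 0"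
      using in_closed_iff_infdist_zero[OF assms(3,4)] infdist_nonneg[of p C]
      by (auto simp: S_def)
    then obtain m where "inverse (real (Suc m)) < infdist p C"
      using reals_Archimedean by blast
    moreover have "p \<in> S m" using p by blast
    ultimately show "p \<in> {}" by (simp add: S_def inverse_eq_divide)
  qed
  ultimately have "(\<lambda>m. measure M (S m)) \<longlonglongrightarrow> 0"
    by simp
  from order_tendstoD(2)[OF this \<open>e > 0\<close>] obtain m where "measure M (S m) < e"
    by (auto simp: eventually_sequentially)
  then show ?thesis
    using that[of "1 / real (Suc m)"] by (simp add: S_def)
qed

lemma finite_measure_UN_diff_UN_lessThan_small:
  assumes "finite_measure M" and "\<And>i::nat. C i \<in> sets M" and "e > 0"
  obtains N where "measure M ((\<Union>i. C i) - (\<Union>i<N. C i)) < e"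
proof -
  interpret finite_measure M by fact
  have "(\<lambda>N. measure M (\<Union>i<N. C i)) \<longlonglongrightarrow> measure M (\<Union>N. \<Union>i<N. C i)"
    using assms(2)
    by (intro finite_Lim_measure_incseq) (auto simp: incseq_def, meson lessThan_iff less_le_trans)
  moreover have "(\<Union>N. \<Union>i<N. C i) = (\<Union>i. C i)" by auto
  ultimately have "(\<lambda>N. measure M (\<Union>i. C i) - measure M (\<Union>i<N. C i))
      \<longlonglongrightarrow> measure M (\<Union>i. C i) - measure M (\<Union>i. C i)"
    by (intro tendsto_diff tendsto_const) simp
  then have "(\<lambda>N. measure M (\<Union>i. C i) - measure M (\<Union>i<N. C i)) \<longlonglongrightarrow> 0"
    by simp
  from order_tendstoD(2)[OF this \<open>e > 0\<close>] obtain N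
    where "measure M (\<Union>i. C i) - measure M (\<Union>i<N. C i) < e"
    by (auto simp: eventually_sequentially)
  then show ?thesis
    using assms(2) by (intro that[of N]) (subst finite_measure_Diff, auto)
qed

definition closed_open_approximable :: "'a::topological_space measure \<Rightarrow> 'a set \<Rightarrow> bool" where
  "closed_open_approximable M A \<longleftrightarrow>
     (\<forall>e>0. \<exists>C U. closed C \<and> open U \<and> C \<subseteq> A \<and> A \<subseteq> U \<and> measure M (U - C) < e)"

lemma closed_open_approximableE:
  assumes "closed_open_approximable M A" and "e > 0"
  obtains C U where "closed C" "open U" "C \<subseteq> A" "A \<subseteq> U" "measure M (U - C) < e"
  using assms unfolding closed_open_approximable_def by meson

lemma closed_open_approximable_closed:
  fixes M :: "'a::metric_space measure"
  assumes "finite_measure M" and "sets M = sets borel" and "closed A"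
  shows "closed_open_approximable M A"
  unfolding closed_open_approximable_def
proof (intro allI impI)
  fix e :: real assume "e > 0"
  show "\<exists>C U. closed C \<and> open U \<and> C \<subseteq> A \<and> A \<subseteq> U \<and> measure M (U - C) < e"
  proof (cases "A = {}")
    case True
    with \<open>e > 0\<close> show ?thesis by (intro exI[of _ "{}"]) auto
  next
    case False
    obtain r where "r > 0" and "measure M ({p. infdist p A < r} - A) < e"
      using finite_measure_thickening_diff_small[OF assms False \<open>e > 0\<close>] .
    moreover have "open {p. infdist p A < r}"
      by (intro open_Collect_less continuous_intros)
    ultimately show ?thesis
      using \<open>closed A\<close> by (intro exI[of _ A] exI[of _ "{p. infdist p A < r}"]) auto
  qed
qed

lemma closed_open_approximable_Compl:
  assumes "closed_open_approximable M A"
  shows "closed_open_approximable M (UNIV - A)"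
  unfolding closed_open_approximable_def
proof (intro allI impI)
  fix e :: real assume "e > 0"
  with assms obtain C U where "closed C" "open U" "C \<subseteq> A" "A \<subseteq> U" "measure M (U - C) < e"
    by (rule closed_open_approximableE)
  moreover have "(UNIV - C) - (UNIV - U) = U - C"
    by blast
  ultimately have "closed (UNIV - U) \<and> open (UNIV - C) \<and> UNIV - U \<subseteq> UNIV - A \<and>
      UNIV - A \<subseteq> UNIV - C \<and> measure M ((UNIV - C) - (UNIV - U)) < e"
    by (simp add: closed_Diff open_Diff Diff_mono)
  then show "\<exists>C' U'. closed C' \<and> open U' \<and> C' \<subseteq> UNIV - A \<and> UNIV - A \<subseteq> U' \<and>
      measure M (U' - C') < e"
    by blast
qed

lemma closed_open_approximable_UN:
  fixes M :: "'a::topological_space measure"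
  assumes "finite_measure M" and "sets M = sets borel"
    and "\<And>i::nat. closed_open_approximable M (A i)"
  shows "closed_open_approximable M (\<Union>i. A i)"
  unfolding closed_open_approximable_def
proof (intro allI impI)
  interpret finite_measure M by fact
  fix e :: real assume "e > 0"
  define d where "d i = e / 4 * (1 / 2) ^ i" for i :: nat
  have "d i > 0" for i using \<open>e > 0\<close> by (simp add: d_def)
  then have "\<forall>i. \<exists>C U. closed C \<and> open U \<and> C \<subseteq> A i \<and> A i \<subseteq> U \<and> measure M (U - C) < d i"
    using assms(3) unfolding closed_open_approximable_def by blast
  then obtain C U where C: "\<And>i. closed (C i)" and U: "\<And>i. open (U i)"
    and CAU: "\<And>i. C i \<subseteq> A i" "\<And>i. A i \<subseteq> U i" and small: "\<And>i. measure M (U i - C i) < d i"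
    by metis
  have C_sets [measurable]: "C i \<in> sets M" and [measurable]: "U i \<in> sets M" for i
    using C U by (simp_all add: assms(2))
  have d_sums: "d sums (e / 2)"
    using sums_mult[OF geometric_sums[of "1/2::real"], of "e / 4"] by (simp add: d_def[abs_def])
  have summable: "summable (\<lambda>i. measure M (U i - C i))"
  proof (rule summable_comparison_test')
    show "summable d"
      using d_sums by (rule sums_summable)
    show "norm (measure M (U i - C i)) \<le> d i" for i
      using small[of i] by simp
  qed
  have "measure M (\<Union>i. U i - C i) \<le> (\<Sum>i. measure M (U i - C i))"
    using summable by (intro finite_measure_subadditive_countably) auto
  also have "\<dots> \<le> (\<Sum>i. d i)"
    using summable d_sums small by (intro suminf_le) (auto simp: sums_summable less_imp_le)
  also have "\<dots> = e / 2"
    using d_sums by (simp add: sums_iff)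
  finally have outer: "measure M (\<Union>i. U i - C i) \<le> e / 2" .
  have "e / 2 > 0"
    using \<open>e > 0\<close> by simp
  then obtain N where inner: "measure M ((\<Union>i. C i) - (\<Union>i<N. C i)) < e / 2"
    by (rule finite_measure_UN_diff_UN_lessThan_small[where C=C, OF assms(1) C_sets])
  have "(\<Union>i. U i) - (\<Union>i<N. C i) \<subseteq> (\<Union>i. U i - C i) \<union> ((\<Union>i. C i) - (\<Union>i<N. C i))"
    by blast
  then have "measure M ((\<Union>i. U i) - (\<Union>i<N. C i))
      \<le> measure M ((\<Union>i. U i - C i) \<union> ((\<Union>i. C i) - (\<Union>i<N. C i)))"
    by (intro finite_measure_mono) auto
  also have "\<dots> \<le> measure M (\<Union>i. U i - C i) + measure M ((\<Union>i. C i) - (\<Union>i<N. C i))"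
    by (intro measure_Un_le) auto
  also have "\<dots> < e"
    using outer inner by simp
  finally have "measure M ((\<Union>i. U i) - (\<Union>i<N. C i)) < e" .
  moreover have "closed (\<Union>i<N. C i)" and "open (\<Union>i. U i)"
    using C U by auto
  moreover have "(\<Union>i<N. C i) \<subseteq> (\<Union>i. A i)" and "(\<Union>i. A i) \<subseteq> (\<Union>i. U i)"
    using CAU by blast+
  ultimately show "\<exists>C' U'. closed C' \<and> open U' \<and> C' \<subseteq> (\<Union>i. A i) \<and> (\<Union>i. A i) \<subseteq> U' \<and>
      measure M (U' - C') < e"
    by blast
qed

lemma closed_open_approximable_borel:
  fixes M :: "'a::metric_space measure"
  assumes "finite_measure M" and "sets M = sets borel" and "A \<in> sets borel"
  shows "closed_open_approximable M A"
proof -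
  have "A \<in> sigma_sets UNIV (Collect closed)"
    using assms(3) by (simp add: borel_eq_closed)
  then show ?thesis
  proof induction
    case (Basic A)
    then show ?case using closed_open_approximable_closed[OF assms(1,2)] by simp
  next
    case Empty
    then show ?case using closed_open_approximable_closed[OF assms(1,2)] by simp
  next
    case (Compl A)
    from Compl.IH show ?case by (rule closed_open_approximable_Compl)
  next
    case (Union A)
    from Union.IH show ?case by (rule closed_open_approximable_UN[OF assms(1,2)])
  qed
qed

lemma finite_measure_closed_inner_approx:
  fixes M :: "'a::metric_space measure"
  assumes "finite_measure M" and "sets M = sets borel" and "A \<in> sets borel" and "e > 0"
  obtains C where "closed C" and "C \<subseteq> A" and "measure M (A - C) < e"
proof -
  from closed_open_approximable_borel[OF assms(1-3)] \<open>e > 0\<close> obtain C U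
    where "closed C" "C \<subseteq> A" "open U" "A \<subseteq> U" and U_C: "measure M (U - C) < e"
    by (rule closed_open_approximableE)
  moreover have "U - C \<in> sets M"
    using \<open>open U\<close> \<open>closed C\<close> by (intro sets.Diff) (simp_all add: assms(2))
  with \<open>A \<subseteq> U\<close> have "measure M (A - C) \<le> measure M (U - C)"
    by (intro finite_measure.finite_measure_mono[OF assms(1)]) auto
  ultimately show ?thesis
    using that by simp
qed

lemma lipschitz_on_infdist_cutoff:
  assumes "r > 0"
  shows "(1 / r)-lipschitz_on UNIV (\<lambda>p. max 0 (1 - infdist p C / r))"
proof (rule lipschitz_onI)
  fix p q
  have "dist (max 0 (1 - infdist p C / r)) (max 0 (1 - infdist q C / r))
      \<le> \<bar>infdist p C / r - infdist q C / r\<bar>"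
    unfolding dist_real_def by linarith
  also have "\<dots> = \<bar>infdist p C - infdist q C\<bar> / r"
    using \<open>r > 0\<close> by (simp add: diff_divide_distrib[symmetric])
  also have "\<dots> \<le> 1 / r * dist p q"
    using \<open>r > 0\<close> infdist_triangle_abs[of p C q] by (simp add: divide_right_mono)
  finally show "dist (max 0 (1 - infdist p C / r)) (max 0 (1 - infdist q C / r)) \<le> 1 / r * dist p q" .
qed (use \<open>r > 0\<close> in simp)

lemma abs_indicator_diff_infdist_cutoff_le:
  assumes "C \<subseteq> A" and "r > 0"
  shows "\<bar>indicator A p - max 0 (1 - infdist p C / r)\<bar>
    \<le> indicator (A - C) p + indicator ({q. infdist q C < r} - C) p"
proof (cases "p \<in> C")
  case True
  then show ?thesis using assms(1) by (auto simp: infdist_zero indicator_def)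
next
  case p_notin: False
  show ?thesis
  proof (cases "infdist p C < r")
    case True
    then have "0 \<le> infdist p C / r" and "infdist p C / r \<le> 1"
      using \<open>r > 0\<close> by (simp_all add: infdist_nonneg)
    with p_notin True show ?thesis
      by (auto simp: indicator_def)
  next
    case False
    then have "max 0 (1 - infdist p C / r) = 0"
      using \<open>r > 0\<close> by simp
    with p_notin show ?thesis
      by (simp add: indicator_def)
  qed
qed

lemma indicator_L1_approx_lipschitz:
  fixes M :: "'a::metric_space measure" and e :: real
  assumes "finite_measure M" and "sets M = sets borel" and "A \<in> sets borel" and "e > 0"
  obtains g L where "L-lipschitz_on UNIV g" and "\<And>p. g p \<in> {0..1}"
    and "(\<integral>p. \<bar>indicator A p - g p\<bar> \<partial>M) < e"
proof -
  interpret finite_measure M by fact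
  have space: "space M = UNIV"
    using sets_eq_imp_space_eq[OF assms(2)] by simp
  have [measurable]: "A \<in> sets M"
    using assms(2,3) by simp
  have "e / 2 > 0"
    using \<open>e > 0\<close> by simp
  then obtain C where C: "closed C" "C \<subseteq> A" and A_C: "measure M (A - C) < e / 2"
    by (rule finite_measure_closed_inner_approx[OF assms(1-3)])
  have [measurable]: "C \<in> sets M"
    using C by (simp add: assms(2))
  show thesis
  proof (cases "C = {}")
    case True
    with A_C have "measure M A < e / 2"
      by simp
    with measure_nonneg[of M A] have "measure M A < e"
      by linarith
    then have "(\<integral>p. \<bar>indicator A p - 0\<bar> \<partial>M) < e"
      by (simp add: space)
    with that[OF lipschitz_on_constant, of 0] show ?thesis
      by simp
  next
    case False
    obtain r where "r > 0" and T_C: "measure M ({p. infdist p C < r} - C) < e / 2"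
      by (rule finite_measure_thickening_diff_small[OF assms(1,2) \<open>closed C\<close> False \<open>e / 2 > 0\<close>])
    define T where "T = {p. infdist p C < r}"
    have [measurable]: "T \<in> sets M"
      unfolding T_def assms(2) by (intro borel_open open_Collect_less continuous_intros)
    define g where "g p = max 0 (1 - infdist p C / r)" for p
    have g01: "g p \<in> {0..1}" for p
      using infdist_nonneg[of p C] \<open>r > 0\<close> by (auto simp: g_def)
    have lip: "(1 / r)-lipschitz_on UNIV g"
      unfolding g_def[abs_def] using \<open>r > 0\<close> by (rule lipschitz_on_infdist_cutoff)
    have [measurable]: "g \<in> borel_measurable M"
      using borel_measurable_continuous_onI[OF lipschitz_on_continuous_on[OF lip]]
      by (simp add: measurable_cong_sets[OF assms(2) refl])
    have pointwise: "\<bar>indicator A p - g p\<bar> \<le> indicator (A - C) p + indicator (T - C) p" for p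
      unfolding g_def T_def using C(2) \<open>r > 0\<close> by (rule abs_indicator_diff_infdist_cutoff_le)
    have [measurable]: "(\<lambda>p. \<bar>indicator A p - g p\<bar>) \<in> borel_measurable M"
      by measurable
    then have "integrable M (\<lambda>p. \<bar>indicator A p - g p\<bar>)"
      using g01 by (intro integrable_const_bound[where B=1]) (auto simp: indicator_def)
    moreover have "integrable M (\<lambda>p. indicator (A - C) p + indicator (T - C) p :: real)"
      by (intro Bochner_Integration.integrable_add integrable_real_indicator)
        (auto simp: less_top[symmetric])
    ultimately have "(\<integral>p. \<bar>indicator A p - g p\<bar> \<partial>M)
        \<le> (\<integral>p. indicator (A - C) p + indicator (T - C) p \<partial>M)"
      using pointwise by (rule integral_mono)
    also have "\<dots> = measure M (A - C) + measure M (T - C)"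
      by (subst Bochner_Integration.integral_add)
        (auto intro!: integrable_real_indicator simp: space less_top[symmetric])
    also have "\<dots> < e"
      using A_C T_C by (simp add: T_def)
    finally show ?thesis
      by (rule that[OF lip g01])
  qed
qed

section \<open>Measure-preserving maps and orbit averages\<close>

definition orbit_average :: "('a \<Rightarrow> 'a) \<Rightarrow> ('a \<Rightarrow> real) \<Rightarrow> nat \<Rightarrow> 'a \<Rightarrow> real" where
  "orbit_average T g N p = (\<Sum>n=1..N. g ((T ^^ n) p)) / real N"

lemma orbit_average_unit_interval:
  assumes "\<And>p. g p \<in> {0..1}"
  shows "orbit_average T g N p \<in> {0..1}"
proof -
  have "(\<Sum>n=1..N. g ((T ^^ n) p)) \<le> real N"
    using sum_mono[of "{1..N}" "\<lambda>n. g ((T ^^ n) p)" "\<lambda>_. 1"] assms by simp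
  moreover have "0 \<le> (\<Sum>n=1..N. g ((T ^^ n) p))"
    using assms by (intro sum_nonneg) auto
  ultimately show ?thesis
    by (cases "N = 0") (auto simp: orbit_average_def divide_le_eq)
qed

lemma measurable_funpow:
  assumes "T \<in> M \<rightarrow>\<^sub>M M"
  shows "T ^^ n \<in> M \<rightarrow>\<^sub>M M"
  by (induction n) (auto intro: measurable_comp[OF _ assms, simplified comp_def])

lemma invariant_measureD:
  assumes "invariant_measure M T"
  shows "T \<in> M \<rightarrow>\<^sub>M M" and "distr M M T = M"
  using assms by (simp_all add: invariant_measure_def)

lemma invariant_measure_funpow:
  assumes "invariant_measure M T"
  shows "invariant_measure M (T ^^ n)"
proof (induction n)
  case 0
  then show ?case by (simp add: invariant_measure_def id_def)
next
  case (Suc n)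
  note T = invariant_measureD[OF assms] and Tn = invariant_measureD[OF Suc]
  have "distr M M (\<lambda>p. T ((T ^^ n) p)) = distr (distr M M (T ^^ n)) M T"
    using distr_distr[OF T(1) Tn(1)] by (simp add: comp_def)
  with T Tn measurable_comp[OF Tn(1) T(1)] show ?case
    by (simp add: invariant_measure_def)
qed

lemma integral_comp_invariant_measure:
  fixes f :: "'a \<Rightarrow> real"
  assumes "invariant_measure M T" and "f \<in> borel_measurable M"
  shows "(\<integral>p. f (T p) \<partial>M) = (\<integral>p. f p \<partial>M)"
  using integral_distr[OF invariant_measureD(1)[OF assms(1)] assms(2)]
  by (simp add: invariant_measureD(2)[OF assms(1)])

lemma AE_comp_invariant_measure:
  assumes "invariant_measure M T" and "AE p in M. P p"
  shows "AE p in M. P (T p)"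
proof -
  have "AE p in distr M M T. P p"
    unfolding invariant_measureD(2)[OF assms(1)] by (rule assms(2))
  then show ?thesis
    by (rule AE_distrD[OF invariant_measureD(1)[OF assms(1)]])
qed

lemma invariant_set_funpow_iff:
  assumes "invariant_measure M T" and "T -` A \<inter> space M = A" and "p \<in> space M"
  shows "(T ^^ n) p \<in> A \<longleftrightarrow> p \<in> A"
proof (induction n)
  case (Suc n)
  have "(T ^^ n) p \<in> space M"
    using measurable_space[OF measurable_funpow[OF invariant_measureD(1)[OF assms(1)]]] assms(3)
    by blast
  then have "T ((T ^^ n) p) \<in> A \<longleftrightarrow> (T ^^ n) p \<in> A"
    using assms(2) by blast
  with Suc show ?case by simp
qed simp

lemma integral_indicator_diff_orbit_average_le:
  fixes g :: "'a \<Rightarrow> real"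
  assumes "invariant_measure M T" and "finite_measure M"
    and "T -` A \<inter> space M = A" and "A \<in> sets M"
    and "g \<in> borel_measurable M" and "\<And>p. g p \<in> {0..1}" and "N > 0"
  shows "(\<integral>p. \<bar>indicator A p - orbit_average T g N p\<bar> \<partial>M) \<le> (\<integral>p. \<bar>indicator A p - g p\<bar> \<partial>M)"
proof -
  define h where "h p = \<bar>indicator A p - g p\<bar>" for p
  have h_meas: "h \<in> borel_measurable M"
    unfolding h_def using assms(4,5) by measurable
  have h_int: "integrable M (\<lambda>p. h ((T ^^ n) p))" for n
  proof (rule finite_measure.integrable_const_bound[OF assms(2), where B=1])
    show "AE p in M. norm (h ((T ^^ n) p)) \<le> 1"
      using assms(6) by (auto simp: h_def indicator_def)
    show "(\<lambda>p. h ((T ^^ n) p)) \<in> borel_measurable M"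
      using measurable_comp[OF measurable_funpow[OF invariant_measureD(1)[OF assms(1)]] h_meas]
      by (simp add: comp_def)
  qed
  have "\<bar>indicator A p - orbit_average T g N p\<bar> \<le> (\<Sum>n=1..N. h ((T ^^ n) p)) / real N"
    if "p \<in> space M" for p
  proof -
    have "indicator A p = (\<Sum>n=1..N. indicator A ((T ^^ n) p) :: real) / real N"
      using invariant_set_funpow_iff[OF assms(1,3) that] \<open>N > 0\<close> by (simp add: indicator_def)
    then have "\<bar>indicator A p - orbit_average T g N p\<bar>
        = \<bar>\<Sum>n=1..N. indicator A ((T ^^ n) p) - g ((T ^^ n) p)\<bar> / real N"
      by (simp add: orbit_average_def sum_subtractf diff_divide_distrib[symmetric])
    also have "\<dots> \<le> (\<Sum>n=1..N. h ((T ^^ n) p)) / real N"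
      unfolding h_def by (intro divide_right_mono sum_abs) auto
    finally show ?thesis .
  qed
  then have "(\<integral>p. \<bar>indicator A p - orbit_average T g N p\<bar> \<partial>M)
      \<le> (\<integral>p. (\<Sum>n=1..N. h ((T ^^ n) p)) / real N \<partial>M)"
    using h_int by (intro integral_mono') (auto simp: h_def intro!: sum_nonneg)
  also have "\<dots> = (\<Sum>n=1..N. (\<integral>p. h ((T ^^ n) p) \<partial>M)) / real N"
    using h_int by (simp add: integral_sum)
  also have "\<dots> = (\<integral>p. h p \<partial>M)"
    using integral_comp_invariant_measure[OF invariant_measure_funpow[OF assms(1)] h_meas] \<open>N > 0\<close>
    by simp
  finally show ?thesis
    by (simp add: h_def)
qed

lemma integral_abs_diff_triangle:
  fixes f g h :: "'a \<Rightarrow> real"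
  assumes "integrable M f" and "integrable M g" and "integrable M h"
  shows "(\<integral>p. \<bar>f p - h p\<bar> \<partial>M) \<le> (\<integral>p. \<bar>f p - g p\<bar> \<partial>M) + (\<integral>p. \<bar>g p - h p\<bar> \<partial>M)"
proof -
  have int: "integrable M (\<lambda>p. \<bar>f p - g p\<bar>)" "integrable M (\<lambda>p. \<bar>g p - h p\<bar>)"
    using assms by auto
  have "(\<integral>p. \<bar>f p - h p\<bar> \<partial>M) \<le> (\<integral>p. \<bar>f p - g p\<bar> + \<bar>g p - h p\<bar> \<partial>M)"
    using int by (intro integral_mono') auto
  also have "\<dots> = (\<integral>p. \<bar>f p - g p\<bar> \<partial>M) + (\<integral>p. \<bar>g p - h p\<bar> \<partial>M)"
    using int by (rule Bochner_Integration.integral_add)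
  finally show ?thesis .
qed

lemma measure_sym_diff_superlevel_le:
  fixes f :: "'a \<Rightarrow> real"
  assumes "finite_measure M" and "A \<in> sets M" and "f \<in> borel_measurable M"
    and "integrable M (\<lambda>p. \<bar>indicator A p - f p\<bar>)"
  shows "measure M (sym_diff A {p \<in> space M. f p > 1 / 2}) \<le> 2 * (\<integral>p. \<bar>indicator A p - f p\<bar> \<partial>M)"
proof -
  interpret finite_measure M by fact
  define S where "S = sym_diff A {p \<in> space M. f p > 1 / 2}"
  have "S \<in> sets M"
    unfolding S_def using assms(2,3) by measurable
  then have "measure M S = (\<integral>p. indicator S p \<partial>M)"
    by simp
  also have "\<dots> \<le> (\<integral>p. 2 * \<bar>indicator A p - f p\<bar> \<partial>M)"
    using \<open>S \<in> sets M\<close> assms(2,4) sets.sets_into_space[OF assms(2)]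
    by (intro integral_mono integrable_real_indicator)
      (auto simp: S_def indicator_def less_top[symmetric])
  finally show ?thesis
    by (simp add: S_def)
qed

lemma AE_iff_eventually_of_summable_sym_diff:
  assumes "finite_measure M" and "A \<in> sets M" and "\<And>j. C j \<in> sets M"
    and "summable (\<lambda>j. measure M (sym_diff A (C j)))"
  shows "AE p in M. p \<in> A \<longleftrightarrow> eventually (\<lambda>j. p \<in> C j) sequentially"
proof -
  interpret finite_measure M by fact
  have "AE p in M. eventually (\<lambda>j. p \<in> space M - sym_diff A (C j)) sequentially"
    using assms(2-4) by (intro borel_cantelli_AE1) (auto simp: less_top[symmetric])
  then show ?thesis
  proof eventually_elim
    case (elim p)
    then have agree: "eventually (\<lambda>j. p \<in> C j \<longleftrightarrow> p \<in> A) sequentially"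
      by (rule eventually_mono) blast
    show ?case
    proof (cases "p \<in> A")
      case True
      with agree show ?thesis by simp
    next
      case False
      with agree have "eventually (\<lambda>j. p \<notin> C j) sequentially"
        by simp
      then have "\<not> eventually (\<lambda>j. p \<in> C j) sequentially"
        using eventually_False_sequentially eventually_elim2 by blast
      with False show ?thesis by simp
    qed
  qed
qed

lemma AE_iff_eventually_funpow:
  assumes "invariant_measure M T" and "T -` A \<inter> space M = A"
    and "AE p in M. p \<in> A \<longleftrightarrow> p \<in> E"
  shows "AE p in M. p \<in> A \<longleftrightarrow> eventually (\<lambda>n. (T ^^ n) p \<in> E) sequentially"
proof -
  have "AE p in M. \<forall>n. (T ^^ n) p \<in> A \<longleftrightarrow> (T ^^ n) p \<in> E"
    unfolding AE_all_countable
    using AE_comp_invariant_measure[OF invariant_measure_funpow[OF assms(1)] assms(3)] by blast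
  with AE_space show ?thesis
  proof eventually_elim
    case (elim p)
    then have "(T ^^ n) p \<in> E \<longleftrightarrow> p \<in> A" for n
      using invariant_set_funpow_iff[OF assms(1,2), of p n] by blast
    then show ?case by simp
  qed
qed

lemma vimage_eventually_funpow:
  "S -` {x. eventually (\<lambda>n. (S ^^ n) x \<in> B) sequentially} = {x. eventually (\<lambda>n. (S ^^ n) x \<in> B) sequentially}"
proof -
  have "(S ^^ n) (S x) = (S ^^ Suc n) x" for n x
    by (simp only: funpow_Suc_right comp_apply)
  then have "eventually (\<lambda>n. (S ^^ n) (S x) \<in> B) sequentially \<longleftrightarrow> eventually (\<lambda>n. (S ^^ n) x \<in> B) sequentially"
    for x using eventually_sequentially_Suc[of "\<lambda>n. (S ^^ n) x \<in> B"] by simp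
  then show ?thesis by auto
qed

section \<open>The skew product\<close>

lemma beta_shift_funpow: "(beta_shift ^^ n) \<sigma> = (\<lambda>k. \<sigma> (k + n))"
  by (induction n) (auto simp: beta_shift_def)

lemma fst_skew: "fst (skew \<omega> p) = beta_shift (fst p)"
  and snd_skew: "snd (skew \<omega> p) = \<omega> (fst p 0) (snd p)"
  by (simp_all add: skew_def)

lemma fst_skew_funpow: "fst ((skew \<omega> ^^ n) p) = (beta_shift ^^ n) (fst p)"
  by (induction n) (simp_all add: fst_skew)

lemma snd_skew_funpow: "snd ((skew \<omega> ^^ n) p) = comp_iter \<omega> (fst p) n (snd p)"
  by (induction n) (simp_all add: snd_skew fst_skew_funpow beta_shift_funpow)

lemma continuous_on_beta_shift: "continuous_on UNIV (beta_shift :: (nat \<Rightarrow> 'l::topological_space) \<Rightarrow> _)"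
  unfolding beta_shift_def[abs_def]
  by (intro continuous_on_coordinatewise_then_product continuous_on_product_coordinates)

lemma continuous_on_skew:
  fixes \<omega> :: "'l::topological_space \<Rightarrow> 'x::topological_space \<Rightarrow> 'x"
  assumes "continuous_on UNIV (\<lambda>(l, x). \<omega> l x)"
  shows "continuous_on UNIV (skew \<omega>)"
proof -
  have coord: "continuous_on UNIV (\<lambda>p::(nat \<Rightarrow> 'l) \<times> 'x. fst p i)" for i
    using continuous_on_compose2[OF continuous_on_product_coordinates continuous_on_fst[OF continuous_on_id]]
    by auto
  have "continuous_on UNIV (\<lambda>p::(nat \<Rightarrow> 'l) \<times> 'x. (\<lambda>(l, x). \<omega> l x) (fst p 0, snd p))"
    by (rule continuous_on_compose2[OF assms]) (intro continuous_on_Pair coord continuous_on_snd continuous_on_id, simp)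
  moreover have "continuous_on UNIV (\<lambda>p::(nat \<Rightarrow> 'l) \<times> 'x. beta_shift (fst p))"
    by (rule continuous_on_compose2[OF continuous_on_beta_shift continuous_on_fst[OF continuous_on_id]]) auto
  ultimately show ?thesis
    unfolding skew_def[abs_def] using continuous_on_Pair by fastforce
qed

lemma continuous_on_funpow:
  fixes f :: "'a::topological_space \<Rightarrow> 'a"
  assumes "continuous_on UNIV f"
  shows "continuous_on UNIV (f ^^ n)"
proof (induction n)
  case (Suc n)
  have "continuous_on UNIV (f \<circ> f ^^ n)"
    using Suc by (rule continuous_on_compose) (rule continuous_on_subset[OF assms], simp)
  then show ?case
    by simp
qed (simp add: continuous_on_id')

lemma continuous_on_orbit_average:
  assumes "continuous_on UNIV T" and "continuous_on UNIV g"
  shows "continuous_on UNIV (orbit_average T g N)"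
  unfolding orbit_average_def[abs_def] divide_inverse
  by (intro continuous_intros continuous_on_compose2[OF assms(2) continuous_on_funpow[OF assms(1)]]) auto

lemma dist_skew_funpow_fiber_le:
  assumes "bounded (UNIV :: 'x::metric_space set)"
  shows "dist ((skew \<omega> ^^ n) (\<sigma>, x)) ((skew \<omega> ^^ n) (\<sigma>, y :: 'x))
    \<le> diameter (range (comp_iter \<omega> \<sigma> n))"
proof -
  have "(skew \<omega> ^^ n) (\<sigma>, z) = ((beta_shift ^^ n) \<sigma>, comp_iter \<omega> \<sigma> n z)" for z
    by (simp add: prod_eq_iff fst_skew_funpow snd_skew_funpow)
  then have "dist ((skew \<omega> ^^ n) (\<sigma>, x)) ((skew \<omega> ^^ n) (\<sigma>, y))
      = dist (comp_iter \<omega> \<sigma> n x) (comp_iter \<omega> \<sigma> n y)"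
    by (simp add: dist_Pair_Pair)
  also have "\<dots> \<le> diameter (range (comp_iter \<omega> \<sigma> n))"
    by (rule diameter_bounded_bound) (auto intro: bounded_subset[OF assms])
  finally show ?thesis .
qed

lemma orbit_average_skew_fiber_diff_le:
  assumes "bounded (UNIV :: 'x::metric_space set)" and "L-lipschitz_on UNIV g"
  shows "\<bar>orbit_average (skew \<omega>) g N (\<sigma>, x) - orbit_average (skew \<omega>) g N (\<sigma>, y :: 'x)\<bar>
    \<le> L * (1 / real N * (\<Sum>i=1..N. diameter (range (comp_iter \<omega> \<sigma> i))))"
proof -
  have "\<bar>orbit_average (skew \<omega>) g N (\<sigma>, x) - orbit_average (skew \<omega>) g N (\<sigma>, y)\<bar>
      = \<bar>\<Sum>n=1..N. g ((skew \<omega> ^^ n) (\<sigma>, x)) - g ((skew \<omega> ^^ n) (\<sigma>, y))\<bar> / real N"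
    by (simp add: orbit_average_def sum_subtractf diff_divide_distrib[symmetric])
  also have "\<dots> \<le> (\<Sum>n=1..N. \<bar>g ((skew \<omega> ^^ n) (\<sigma>, x)) - g ((skew \<omega> ^^ n) (\<sigma>, y))\<bar>) / real N"
    by (intro divide_right_mono sum_abs) auto
  also have "\<dots> \<le> (\<Sum>n=1..N. L * diameter (range (comp_iter \<omega> \<sigma> n))) / real N"
  proof (intro divide_right_mono sum_mono)
    fix n
    have "\<bar>g ((skew \<omega> ^^ n) (\<sigma>, x)) - g ((skew \<omega> ^^ n) (\<sigma>, y))\<bar>
        \<le> L * dist ((skew \<omega> ^^ n) (\<sigma>, x)) ((skew \<omega> ^^ n) (\<sigma>, y))"
      using lipschitz_onD[OF assms(2)] by (simp add: dist_real_def)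
    also have "\<dots> \<le> L * diameter (range (comp_iter \<omega> \<sigma> n))"
      using dist_skew_funpow_fiber_le[OF assms(1)] lipschitz_on_nonneg[OF assms(2)]
      by (rule mult_left_mono)
    finally show "\<bar>g ((skew \<omega> ^^ n) (\<sigma>, x)) - g ((skew \<omega> ^^ n) (\<sigma>, y))\<bar>
        \<le> L * diameter (range (comp_iter \<omega> \<sigma> n))" .
  qed simp
  also have "\<dots> = L * (1 / real N * (\<Sum>i=1..N. diameter (range (comp_iter \<omega> \<sigma> i))))"
    by (simp add: sum_distrib_left sum_divide_distrib)
  finally show ?thesis .
qed

lemma AE_in_set_of_emeasure_distr_eq_1:
  assumes "prob_space M" and "f \<in> M \<rightarrow>\<^sub>M N" and "B \<in> sets N"
    and "emeasure (distr M N f) B = 1"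
  shows "AE p in M. f p \<in> B"
proof -
  interpret prob_space M by fact
  have "f -` B \<inter> space M \<in> events"
    using measurable_sets[OF assms(2,3)] .
  moreover have "prob (f -` B \<inter> space M) = 1"
    using assms(4) emeasure_distr[OF assms(2,3)] by (simp add: emeasure_eq_measure)
  ultimately have "AE p in M. p \<in> f -` B \<inter> space M"
    using AE_in_set_eq_1 by blast
  then show ?thesis
    by auto
qed

lemma tendsto_integral_orbit_average_fiber_diff:
  fixes \<omega> :: "'l::metric_space \<Rightarrow> 'x::metric_space \<Rightarrow> 'x" and g :: "(nat \<Rightarrow> 'l) \<times> 'x \<Rightarrow> real"
  assumes "bounded (UNIV :: 'x set)" and "continuous_on UNIV (\<lambda>(l, x). \<omega> l x)"
    and "finite_measure \<mu>" and "sets \<mu> = sets borel" and "AE p in \<mu>. fst p \<in> Fset \<omega>"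
    and "L-lipschitz_on UNIV g" and "\<And>p. g p \<in> {0..1}"
  shows "(\<lambda>N. \<integral>p. \<bar>orbit_average (skew \<omega>) g N p - orbit_average (skew \<omega>) g N (fst p, x0)\<bar> \<partial>\<mu>)
    \<longlonglongrightarrow> 0"
proof -
  interpret finite_measure \<mu> by fact
  define D where "D N p = \<bar>orbit_average (skew \<omega>) g N p - orbit_average (skew \<omega>) g N (fst p, x0)\<bar>"
    for N p
  have avg_cont: "continuous_on UNIV (orbit_average (skew \<omega>) g N)" for N
    using continuous_on_orbit_average[OF continuous_on_skew[OF assms(2)] lipschitz_on_continuous_on[OF assms(6)]] .
  have "continuous_on UNIV (\<lambda>p. orbit_average (skew \<omega>) g N (fst p, x0))" for N
    by (rule continuous_on_compose2[OF avg_cont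
        continuous_on_Pair[OF continuous_on_fst[OF continuous_on_id] continuous_on_const]]) simp
  then have "continuous_on UNIV (D N)" for N
    unfolding D_def using avg_cont by (intro continuous_intros)
  then have D_meas: "D N \<in> borel_measurable \<mu>" for N
    using borel_measurable_continuous_onI[of "D N"] by (simp add: measurable_cong_sets[OF assms(4) refl])
  have avg01: "orbit_average (skew \<omega>) g N p \<in> {0..1}" for N p
    by (rule orbit_average_unit_interval) (rule assms(7))
  have D_bound: "norm (D N p) \<le> 1" for N p
    using avg01[of N p] avg01[of N "(fst p, x0)"] by (simp add: D_def abs_le_iff)
  have D_tendsto: "(\<lambda>N. D N p) \<longlonglongrightarrow> 0" if "fst p \<in> Fset \<omega>" for p
  proof -
    define m where "m N = 1 / real N * (\<Sum>i=1..N. diameter (range (comp_iter \<omega> (fst p) i)))" for N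
    have "m \<longlonglongrightarrow> 0"
      using that by (simp add: Fset_def m_def[abs_def])
    then have "(\<lambda>N. L * m N) \<longlonglongrightarrow> 0"
      using tendsto_mult[OF tendsto_const[of L]] by fastforce
    moreover have "D N p \<le> L * m N" for N
      using orbit_average_skew_fiber_diff_le[OF assms(1,6), of \<omega> N "fst p" "snd p" x0]
      by (simp add: D_def m_def)
    moreover have "0 \<le> D N p" for N
      by (simp add: D_def)
    ultimately show ?thesis
      using tendsto_sandwich[of "\<lambda>_. 0" "\<lambda>N. D N p" sequentially "\<lambda>N. L * m N" 0]
      by (simp add: always_eventually)
  qed
  have "(\<lambda>N. integral\<^sup>L \<mu> (D N)) \<longlonglongrightarrow> integral\<^sup>L \<mu> (\<lambda>p. 0)"
  proof (rule integral_dominated_convergence[where w="\<lambda>_. 1"])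
    show "AE p in \<mu>. (\<lambda>N. D N p) \<longlonglongrightarrow> 0"
      using assms(5) by eventually_elim (rule D_tendsto)
  qed (use D_meas D_bound in simp_all)
  then show ?thesis
    by (simp add: D_def[abs_def])
qed

lemma invariant_set_approx_by_fst_vimage:
  fixes \<omega> :: "'l::metric_space \<Rightarrow> 'x::metric_space \<Rightarrow> 'x"
  assumes "bounded (UNIV :: 'x set)" and "continuous_on UNIV (\<lambda>(l, x). \<omega> l x)"
    and "finite_measure \<mu>" and "sets \<mu> = sets borel" and "invariant_measure \<mu> (skew \<omega>)"
    and "AE p in \<mu>. fst p \<in> Fset \<omega>"
    and "A \<in> sets \<mu>" and "skew \<omega> -` A \<inter> space \<mu> = A" and "e > 0"
  obtains B where "B \<in> sets borel" and "measure \<mu> (sym_diff A (fst -` B)) < e"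
proof -
  interpret finite_measure \<mu> by fact
  have space: "space \<mu> = UNIV"
    using sets_eq_imp_space_eq[OF assms(4)] by simp
  have borel_\<mu>: "f \<in> borel_measurable \<mu>" if "continuous_on UNIV f" for f :: "_ \<Rightarrow> real"
    using borel_measurable_continuous_onI[OF that] by (simp add: measurable_cong_sets[OF assms(4) refl])
  have integrable_unit: "integrable \<mu> f" if "f \<in> borel_measurable \<mu>" and "\<And>p. f p \<in> {0..1}"
    for f :: "_ \<Rightarrow> real"
    using that by (intro integrable_const_bound[where B=1]) auto
  have "e / 4 > 0"
    using \<open>e > 0\<close> by simp
  moreover have "A \<in> sets borel"
    using assms(4,7) by simp
  ultimately obtain g L
    where lip: "L-lipschitz_on UNIV g" and g01: "\<And>p. g p \<in> {0..1}"
      and g_close: "(\<integral>p. \<bar>indicator A p - g p\<bar> \<partial>\<mu>) < e / 4"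
    using indicator_L1_approx_lipschitz[OF assms(3,4)] by blast
  have g_cont: "continuous_on UNIV g"
    by (rule lipschitz_on_continuous_on[OF lip])
  define x0 :: 'x where "x0 = undefined"
  define avg where "avg N = orbit_average (skew \<omega>) g N" for N
  from order_tendstoD(2)[OF tendsto_integral_orbit_average_fiber_diff[OF assms(1-4,6) lip g01]
      \<open>e / 4 > 0\<close>]
  obtain N0 where N0: "\<And>N. N \<ge> N0 \<Longrightarrow> (\<integral>p. \<bar>avg N p - avg N (fst p, x0)\<bar> \<partial>\<mu>) < e / 4"
    by (auto simp: eventually_sequentially avg_def)
  define N where "N = Suc N0"
  have "N > 0" and avg_fiber: "(\<integral>p. \<bar>avg N p - avg N (fst p, x0)\<bar> \<partial>\<mu>) < e / 4"
    using N0[of N] by (simp_all add: N_def)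
  define k where "k \<sigma> = avg N (\<sigma>, x0)" for \<sigma>
  have avg_cont: "continuous_on UNIV (avg N)"
    unfolding avg_def by (rule continuous_on_orbit_average[OF continuous_on_skew[OF assms(2)] g_cont])
  have k_cont: "continuous_on UNIV k"
    unfolding k_def by (rule continuous_on_compose2[OF avg_cont continuous_on_Pair[OF continuous_on_id continuous_on_const]]) simp
  have kfst_cont: "continuous_on UNIV (\<lambda>p. k (fst p))"
    by (rule continuous_on_compose2[OF k_cont continuous_on_fst[OF continuous_on_id]]) simp
  have avg01: "avg N p \<in> {0..1}" for p
    unfolding avg_def by (rule orbit_average_unit_interval) (rule g01)
  have int_A: "integrable \<mu> (indicator A :: _ \<Rightarrow> real)"
    using assms(7) by (intro integrable_unit) (auto simp: indicator_def)
  have int_avg: "integrable \<mu> (avg N)"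
    by (intro integrable_unit borel_\<mu> avg_cont avg01)
  have int_k: "integrable \<mu> (\<lambda>p. k (fst p))"
    by (intro integrable_unit borel_\<mu> kfst_cont) (unfold k_def, rule avg01)
  have "(\<integral>p. \<bar>indicator A p - avg N p\<bar> \<partial>\<mu>) \<le> (\<integral>p. \<bar>indicator A p - g p\<bar> \<partial>\<mu>)"
    unfolding avg_def
    by (rule integral_indicator_diff_orbit_average_le[OF assms(5,3,8,7) borel_\<mu>[OF g_cont] g01 \<open>N > 0\<close>])
  then have "(\<integral>p. \<bar>indicator A p - k (fst p)\<bar> \<partial>\<mu>) < e / 2"
    using integral_abs_diff_triangle[OF int_A int_avg int_k] g_close avg_fiber
    by (simp add: k_def)
  moreover have "measure \<mu> (sym_diff A {p \<in> space \<mu>. k (fst p) > 1 / 2})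
      \<le> 2 * (\<integral>p. \<bar>indicator A p - k (fst p)\<bar> \<partial>\<mu>)"
    using int_A int_k
    by (intro measure_sym_diff_superlevel_le[OF assms(3,7) borel_\<mu>[OF kfst_cont]]) auto
  moreover have "{p \<in> space \<mu>. k (fst p) > 1 / 2} = fst -` {\<sigma>. k \<sigma> > 1 / 2}"
    by (auto simp: space)
  ultimately have "measure \<mu> (sym_diff A (fst -` {\<sigma>. k \<sigma> > 1 / 2})) < e"
    by simp
  moreover have "{\<sigma>. k \<sigma> > 1 / 2} \<in> sets borel"
    using k_cont by (intro borel_open open_Collect_less continuous_on_const) auto
  ultimately show thesis
    by (intro that)
qed

lemma invariant_set_AE_eq_fst_vimage:
  fixes \<omega> :: "'l::metric_space \<Rightarrow> 'x::metric_space \<Rightarrow> 'x"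
  assumes "bounded (UNIV :: 'x set)" and "continuous_on UNIV (\<lambda>(l, x). \<omega> l x)"
    and "finite_measure \<mu>" and "sets \<mu> = sets borel" and "invariant_measure \<mu> (skew \<omega>)"
    and "AE p in \<mu>. fst p \<in> Fset \<omega>"
    and "A \<in> sets \<mu>" and "skew \<omega> -` A \<inter> space \<mu> = A"
  obtains I where "I \<in> sets borel" and "beta_shift -` I = I" and "AE p in \<mu>. p \<in> A \<longleftrightarrow> fst p \<in> I"
proof -
  define B where
    "B j = (SOME B. B \<in> sets borel \<and> measure \<mu> (sym_diff A (fst -` B)) < (1 / 2) ^ j)" for j :: nat
  have "\<exists>B. B \<in> sets borel \<and> measure \<mu> (sym_diff A (fst -` B)) < (1 / 2) ^ j" for j :: nat
    by (rule invariant_set_approx_by_fst_vimage[OF assms, of "(1 / 2) ^ j"]) auto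
  then have B: "B j \<in> sets borel \<and> measure \<mu> (sym_diff A (fst -` B j)) < (1 / 2) ^ j" for j
    unfolding B_def by (rule someI_ex)
  then have B_borel: "B j \<in> sets borel" and B_close: "measure \<mu> (sym_diff A (fst -` B j)) < (1 / 2) ^ j"
    for j by simp_all
  have fst_vimage: "fst -` C \<in> sets \<mu>" if "C \<in> sets borel" for C :: "(nat \<Rightarrow> 'l) set"
    using measurable_sets[OF borel_measurable_continuous_onI[OF continuous_on_fst[OF continuous_on_id]] that]
    by (simp add: assms(4))
  have "summable (\<lambda>j. measure \<mu> (sym_diff A (fst -` B j)))"
    by (rule summable_comparison_test'[where g="\<lambda>j. (1 / 2 :: real) ^ j"])
      (use B_close in \<open>auto intro: less_imp_le\<close>)
  then have "AE p in \<mu>. p \<in> A \<longleftrightarrow> eventually (\<lambda>j. p \<in> fst -` B j) sequentially"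
    by (intro AE_iff_eventually_of_summable_sym_diff[OF assms(3,7)] fst_vimage B_borel)
  define B_lim where "B_lim = {\<sigma>. eventually (\<lambda>j. \<sigma> \<in> B j) sequentially}"
  define I where "I = {\<sigma>. eventually (\<lambda>n. (beta_shift ^^ n) \<sigma> \<in> B_lim) sequentially}"
  have "AE p in \<mu>. p \<in> A \<longleftrightarrow> p \<in> fst -` B_lim"
    using \<open>AE p in \<mu>. p \<in> A \<longleftrightarrow> eventually (\<lambda>j. p \<in> fst -` B j) sequentially\<close>
    by (simp add: B_lim_def)
  then have "AE p in \<mu>. p \<in> A \<longleftrightarrow> eventually (\<lambda>n. (skew \<omega> ^^ n) p \<in> fst -` B_lim) sequentially"
    by (rule AE_iff_eventually_funpow[OF assms(5,8)])
  then have "AE p in \<mu>. p \<in> A \<longleftrightarrow> fst p \<in> I"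
    by (simp add: I_def fst_skew_funpow)
  moreover have "beta_shift -` I = I"
    unfolding I_def by (rule vimage_eventually_funpow)
  moreover have "I \<in> sets borel"
  proof -
    have beta_n: "beta_shift ^^ n \<in> borel \<rightarrow>\<^sub>M (borel :: (nat \<Rightarrow> 'l) measure)" for n
      by (intro measurable_funpow borel_measurable_continuous_onI continuous_on_beta_shift)
    have "B_lim \<in> sets borel"
      unfolding B_lim_def using sets_Collect_eventually_sequentially[of borel "\<lambda>\<sigma> j. \<sigma> \<in> B j"] B_borel
      by simp
    then have "{\<sigma>. (beta_shift ^^ n) \<sigma> \<in> B_lim} \<in> sets borel" for n
      using measurable_sets[OF beta_n] by (simp add: vimage_def)
    then show ?thesis
      unfolding I_def using sets_Collect_eventually_sequentially[of borel "\<lambda>\<sigma> n. (beta_shift ^^ n) \<sigma> \<in> B_lim"]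
      by simp
  qed
  ultimately show thesis
    by (intro that)
qed

theorem proposition2:
  fixes \<omega> :: "'l::metric_space \<Rightarrow> 'x::metric_space \<Rightarrow> 'x"
    and \<nu> :: "(nat \<Rightarrow> 'l) measure"
    and \<mu> :: "((nat \<Rightarrow> 'l) \<times> 'x) measure"
  assumes "compact (UNIV :: 'x set)"
    and "compact (UNIV :: 'l set)"
    and "continuous_on UNIV (\<lambda>(l, x). \<omega> l x)"
    and "prob_space \<nu>" and "sets \<nu> = sets borel"
    and "invariant_measure \<nu> beta_shift"
    and "emeasure \<nu> (Fset \<omega>) = 1"
    and "prob_space \<mu>" and "sets \<mu> = sets borel"
    and "invariant_measure \<mu> (skew \<omega>)"
    and "distr \<mu> borel fst = \<nu>"
    and "ergodic \<nu> beta_shift"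
  shows "ergodic \<mu> (skew \<omega>)"
  unfolding ergodic_def
proof (intro conjI ballI impI)
  show "invariant_measure \<mu> (skew \<omega>)"
    by (rule assms(10))
next
  fix A assume A: "A \<in> sets \<mu>" and A_inv: "skew \<omega> -` A \<inter> space \<mu> = A"
  have fst_meas: "fst \<in> \<mu> \<rightarrow>\<^sub>M borel"
    using borel_measurable_continuous_onI[OF continuous_on_fst[OF continuous_on_id]]
    by (simp add: measurable_cong_sets[OF assms(9) refl])
  have "Fset \<omega> \<in> sets borel" \<comment> \<open>non-measurable sets have measure 0\<close>
    using assms(5,7) emeasure_notin_sets by fastforce
  then have "AE p in \<mu>. fst p \<in> Fset \<omega>"
    using assms(7,11) by (intro AE_in_set_of_emeasure_distr_eq_1[OF assms(8) fst_meas]) simp_all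
  then obtain I where I: "I \<in> sets borel" "beta_shift -` I = I"
    and A_eq: "AE p in \<mu>. p \<in> A \<longleftrightarrow> fst p \<in> I"
    by (rule invariant_set_AE_eq_fst_vimage[OF compact_imp_bounded[OF assms(1)] assms(3)
          prob_space.finite_measure[OF assms(8)] assms(9,10) _ A A_inv])
  have "emeasure \<mu> A = emeasure \<mu> (fst -` I \<inter> space \<mu>)"
    using A_eq A measurable_sets[OF fst_meas I(1)] by (intro emeasure_eq_AE) auto
  also have "\<dots> = emeasure \<nu> I"
    using emeasure_distr[OF fst_meas I(1)] assms(11) by simp
  finally show "emeasure \<mu> A = 0 \<or> emeasure \<mu> A = 1"
    using assms(12) I sets_eq_imp_space_eq[OF assms(5)] unfolding ergodic_def
    by (simp add: assms(5))
qed

end
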